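(* Let $v:\mathbb{R}/\mathbb{Z}\to\mathbb{R}$ be real analytic, $\alpha\in\mathbb{R}\setminus\mathbb{Q}$, $x\in\mathbb{R}$, $E\in\mathbb{R}$, and $A=A^{(E-v)}$. There is a constant $C>0$, independent of $k$, $\epsilon$, $x$, $E$ and $v$, such that for every integer $k\ge1$: if $\epsilon>0$ satisfies $\det P_{(k)}=\frac{1}{4\epsilon^2}$, then $$C^{-1}<\frac{\psi(m^+(E+i\epsilon))}{2\epsilon\|P_{(k)}\|}<C.$$
   Context: $A^{(E-v)}(y)=\begin{pmatrix}E-v(y)&-1\\1&0\end{pmatrix}$, $A_n(y)=A(y+(n-1)\alpha)\cdots A(y)$ for $n\ge1$, and $P_{(k)}=\sum_{j=1}^k A_{2j-1}(x+\alpha)^*A_{2j-1}(x+\alpha)$ (a positive self-adjoint $2\times2$ matrix). $H=H_{v,\alpha,x}$ is the operator $(Hu)_n=u_{n+1}+u_{n-1}+v(x+n\alpha)u_n$ on $\ell^2(\mathbb{Z})$. For $z=E+i\epsilon$, $\epsilon>0$, let $u^+$ be a nonzero solution of $Hu^+=zu^+$ (as a formal difference equation) which is square summable at $+\infty$ (unique up to normalization), and $m^+(z)=-u^+_1/u^+_0$; it lies in the upper half plane $\mathbb{H}$. For $t\in\mathbb{R}$ let $R_t=\begin{pmatrix}\cos2\pi t&-\sin2\pi t\\\sin2\pi t&\cos2\pi t\end{pmatrix}$, acting on $\mathbb{H}$ by Möbius transformations $\begin{pmatrix}a&b\\c&d\end{pmatrix}\cdot z=\frac{az+b}{cz+d}$;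 for $z\in\mathbb{H}$ set $z_\beta=R_{-\beta/2\pi}\cdot z$ and $\psi(z)=\sup_\beta|z_\beta|$. *)

theory Defs
  imports "HOL-Analysis.Analysis"
begin

definition real_analytic :: "(real \<Rightarrow> real) \<Rightarrow> bool" where
  "real_analytic f \<longleftrightarrow>
     (\<forall>y. \<exists>r>0. \<exists>c :: nat \<Rightarrow> real. \<forall>t. \<bar>t - y\<bar> < r \<longrightarrow> (\<lambda>n. c n * (t - y) ^ n) sums f t)"

text \<open>A function on R/Z, viewed as a 1-periodic function on R.\<close>
definition periodic1 :: "(real \<Rightarrow> real) \<Rightarrow> bool" where
  "periodic1 f \<longleftrightarrow> (\<forall>y. f (y + 1) = f y)"

definition schr_A :: "(real \<Rightarrow> real) \<Rightarrow> real \<Rightarrow> real \<Rightarrow> real^2^2" where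
  "schr_A v E y = (\<chi> i j. if i = 1 \<and> j = 1 then E - v y
                        else if i = 1 \<and> j = 2 then -1
                        else if i = 2 \<and> j = 1 then 1 else 0)"

fun transfer :: "(real \<Rightarrow> real) \<Rightarrow> real \<Rightarrow> real \<Rightarrow> nat \<Rightarrow> real \<Rightarrow> real^2^2" where
  "transfer v E \<alpha> 0 y = mat 1"
| "transfer v E \<alpha> (Suc n) y = schr_A v E (y + real n * \<alpha>) ** transfer v E \<alpha> n y"

definition Pk :: "(real \<Rightarrow> real) \<Rightarrow> real \<Rightarrow> real \<Rightarrow> real \<Rightarrow> nat \<Rightarrow> real^2^2" where
  "Pk v E \<alpha> x k = (\<Sum>j\<in>{1..k}. transpose (transfer v E \<alpha> (2*j - 1) (x + \<alpha>))
                                   ** transfer v E \<alpha> (2*j - 1) (x + \<alpha>))"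

definition mat_opnorm :: "real^2^2 \<Rightarrow> real" where
  "mat_opnorm M = onorm (\<lambda>w. M *v w)"

definition is_eigensol :: "(real \<Rightarrow> real) \<Rightarrow> real \<Rightarrow> real \<Rightarrow> complex \<Rightarrow> (int \<Rightarrow> complex) \<Rightarrow> bool" where
  "is_eigensol v \<alpha> x z u \<longleftrightarrow>
     (\<forall>n::int. u (n + 1) + u (n - 1) + complex_of_real (v (x + real_of_int n * \<alpha>)) * u n = z * u n)"

definition l2_at_plus_infty :: "(int \<Rightarrow> complex) \<Rightarrow> bool" where
  "l2_at_plus_infty u \<longleftrightarrow> summable (\<lambda>n::nat. (cmod (u (int n)))\<^sup>2)"

definition m_plus :: "(real \<Rightarrow> real) \<Rightarrow> real \<Rightarrow> real \<Rightarrow> complex \<Rightarrow> complex" where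
  "m_plus v \<alpha> x z = (THE m. \<exists>u. u \<noteq> (\<lambda>_. 0) \<and> is_eigensol v \<alpha> x z u \<and> l2_at_plus_infty u
                                \<and> m = - u 1 / u 0)"

definition moebius :: "real^2^2 \<Rightarrow> complex \<Rightarrow> complex" where
  "moebius M z = (of_real (M$1$1) * z + of_real (M$1$2)) / (of_real (M$2$1) * z + of_real (M$2$2))"

definition rot :: "real \<Rightarrow> real^2^2" where
  "rot t = (\<chi> i j. if i = 1 \<and> j = 1 then cos (2*pi*t)
                 else if i = 1 \<and> j = 2 then - sin (2*pi*t)
                 else if i = 2 \<and> j = 1 then sin (2*pi*t) else cos (2*pi*t))"

definition psi :: "complex \<Rightarrow> real" where
  "psi z = (SUP \<beta>\<in>(UNIV::real set). cmod (moebius (rot (- \<beta> / (2*pi))) z))"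

end

theory Submission
  imports Defs
begin

text \<open>Let \<open>\<phi>\<close>, \<open>\<theta>\<close> be the real solutions of \<open>H u = E u\<close> with initial data \<open>(0, 1)\<close> and \<open>(1, 0)\<close>.
  Then \<open>P = P\<^sub>(\<^sub>k\<^sub>)\<close> is their Gram matrix on \<open>1..2k\<close>, so its Hermitian form at \<open>(-m, 1)\<close> is
  \<open>\<Sum>|-m\<phi> + \<theta>|\<^sup>2\<close>. Take \<open>m = m\<^sup>+(E + i\<epsilon>)\<close> and the Weyl solution \<open>u\<close> with \<open>u\<^sub>0 = 1\<close>, \<open>u\<^sub>1 = -m\<close>.
  Variation of parameters writes \<open>u - (-m\<phi> + \<theta>)\<close> as \<open>i\<epsilon>\<close> times a Green-kernel sum, whose square sum is at
  most \<open>det P \<Sum>|u|\<^sup>2\<close> by Cauchy--Schwarz and Lagrange's identity; with \<open>\<epsilon>\<^sup>2 det P = 1/4\<close> and Green's identity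
  \<open>\<epsilon> \<Sum>|u|\<^sup>2 \<le> Im m\<close> this bounds the form by \<open>K Im m\<close>, \<open>K = 9/(4\<epsilon>)\<close>. For a positive definite \<open>P\<close> with diagonal
  \<open>p, r\<close> such a bound pins down the hyperbolic size of \<open>m\<close>: some rotated Moebius image of \<open>m\<close> has imaginary
  part at least \<open>max p r / K\<close>, and \<open>(|m|\<^sup>2 + 1) / Im m \<le> (p + r) K / det P\<close>, which gives \<open>\<psi>(m) \<asymp> \<epsilon> \<parallel>P\<parallel>\<close>.\<close>

fun three_term_sol :: "(nat \<Rightarrow> 'a::comm_ring_1) \<Rightarrow> 'a \<Rightarrow> 'a \<Rightarrow> nat \<Rightarrow> 'a" where
  "three_term_sol c a0 a1 0 = a0"
| "three_term_sol c a0 a1 (Suc 0) = a1"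
| "three_term_sol c a0 a1 (Suc (Suc n)) = c (Suc n) * three_term_sol c a0 a1 (Suc n) - three_term_sol c a0 a1 n"

lemma three_term_sol_step:
  "n \<ge> 1 \<Longrightarrow> three_term_sol c a0 a1 (Suc n) = c n * three_term_sol c a0 a1 n - three_term_sol c a0 a1 (n - 1)"
  by (cases n) auto

lemma three_term_sol_linear:
  "three_term_sol c a0 a1 n = a0 * three_term_sol c 1 0 n + a1 * three_term_sol c 0 1 n"
  by (induction c a0 a1 n rule: three_term_sol.induct) (auto simp: algebra_simps)

lemma three_term_sol_unique:
  assumes "\<And>n. n \<ge> 1 \<Longrightarrow> u (Suc n) = c n * u n - u (n - 1)"
  shows "u n = three_term_sol c (u 0) (u 1) n"
proof -
  have "u n = three_term_sol c (u 0) (u 1) n \<and> u (Suc n) = three_term_sol c (u 0) (u 1) (Suc n)"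
    by (induction n) (simp_all add: assms[of "Suc _", simplified])
  then show ?thesis ..
qed

lemma three_term_sol_wronskian:
  "three_term_sol c 0 1 (Suc n) * three_term_sol c 1 0 n - three_term_sol c 1 0 (Suc n) * three_term_sol c 0 1 n = 1"
  by (induction n) (simp_all add: algebra_simps)

lemma transfer_entries:
  fixes v E \<alpha> x
  defines "c \<equiv> \<lambda>j. E - v (x + real j * \<alpha>)"
  shows "transfer v E \<alpha> n (x + \<alpha>) $ 1 $ 1 = three_term_sol c 0 1 (Suc n) \<and>
    transfer v E \<alpha> n (x + \<alpha>) $ 2 $ 1 = three_term_sol c 0 1 n \<and>
    transfer v E \<alpha> n (x + \<alpha>) $ 1 $ 2 = three_term_sol c 1 0 (Suc n) \<and>
    transfer v E \<alpha> n (x + \<alpha>) $ 2 $ 2 = three_term_sol c 1 0 n"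
proof (induction n)
  case 0
  then show ?case by (simp add: mat_def)
next
  case (Suc n)
  have "x + \<alpha> + real n * \<alpha> = x + real (Suc n) * \<alpha>" by (simp add: algebra_simps)
  with Suc show ?case
    by (simp add: matrix_matrix_mult_def sum_2 schr_A_def c_def del: three_term_sol.simps(3))
      (simp add: three_term_sol_step[of "Suc n"] c_def algebra_simps)
qed

lemma transpose_mult_self_entry:
  fixes M :: "real^2^2"
  shows "(transpose M ** M) $ a $ b = M $ 1 $ a * M $ 1 $ b + M $ 2 $ a * M $ 2 $ b"
  by (simp add: matrix_matrix_mult_def sum_2 transpose_def)

lemma sum_consecutive_pairs:
  "(\<Sum>j\<in>{1..k::nat}. f (2*j) + f (2*j - 1)) = (\<Sum>n\<in>{1..2*k}. f n :: 'a::comm_monoid_add)"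
proof (induction k)
  case (Suc k)
  have "{1..2 * Suc k} = insert (Suc (Suc (2*k))) (insert (Suc (2*k)) {1..2*k})" by auto
  with Suc show ?case by (simp add: add_ac)
qed simp

lemma Pk_entries:
  fixes v E \<alpha> x k
  defines "\<phi> \<equiv> three_term_sol (\<lambda>j. E - v (x + real j * \<alpha>)) 0 1"
    and "\<theta> \<equiv> three_term_sol (\<lambda>j. E - v (x + real j * \<alpha>)) 1 0"
  shows "Pk v E \<alpha> x k $ 1 $ 1 = (\<Sum>n\<in>{1..2*k}. \<phi> n * \<phi> n)"
    and "Pk v E \<alpha> x k $ 1 $ 2 = (\<Sum>n\<in>{1..2*k}. \<phi> n * \<theta> n)"
    and "Pk v E \<alpha> x k $ 2 $ 1 = (\<Sum>n\<in>{1..2*k}. \<phi> n * \<theta> n)"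
    and "Pk v E \<alpha> x k $ 2 $ 2 = (\<Sum>n\<in>{1..2*k}. \<theta> n * \<theta> n)"
proof -
  have odd: "Suc (2 * j - 1) = 2 * j" if "j \<in> {1..k}" for j using that by auto
  have "Pk v E \<alpha> x k $ a $ b = (\<Sum>j\<in>{1..k}. transfer v E \<alpha> (2*j - 1) (x + \<alpha>) $ 1 $ a * transfer v E \<alpha> (2*j - 1) (x + \<alpha>) $ 1 $ b
        + transfer v E \<alpha> (2*j - 1) (x + \<alpha>) $ 2 $ a * transfer v E \<alpha> (2*j - 1) (x + \<alpha>) $ 2 $ b)" for a b
    by (simp add: Pk_def sum_component transpose_mult_self_entry)
  then show "Pk v E \<alpha> x k $ 1 $ 1 = (\<Sum>n\<in>{1..2*k}. \<phi> n * \<phi> n)"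
    and "Pk v E \<alpha> x k $ 1 $ 2 = (\<Sum>n\<in>{1..2*k}. \<phi> n * \<theta> n)"
    and "Pk v E \<alpha> x k $ 2 $ 1 = (\<Sum>n\<in>{1..2*k}. \<phi> n * \<theta> n)"
    and "Pk v E \<alpha> x k $ 2 $ 2 = (\<Sum>n\<in>{1..2*k}. \<theta> n * \<theta> n)"
    unfolding sum_consecutive_pairs[symmetric]
    by (auto intro!: sum.cong simp: transfer_entries odd \<phi>_def \<theta>_def mult.commute)
qed

lemma green_identity:
  fixes u c :: "nat \<Rightarrow> complex"
  assumes step: "\<And>n. n \<ge> 1 \<Longrightarrow> u (Suc n) = c n * u n - u (n - 1)"
    and Im_c: "\<And>n. Im (c n) = \<epsilon>"
  shows "\<epsilon> * (\<Sum>n\<in>{1..N}. (cmod (u n))\<^sup>2) = Im (u (Suc N) * cnj (u N)) - Im (u 1 * cnj (u 0))"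
proof (induction N)
  case (Suc N)
  have u_next: "u (Suc (Suc N)) = c (Suc N) * u (Suc N) - u N"
    using step[of "Suc N"] by simp
  have "Im (u (Suc (Suc N)) * cnj (u (Suc N))) - Im (u (Suc N) * cnj (u N)) = \<epsilon> * (cmod (u (Suc N)))\<^sup>2"
    unfolding u_next cmod_power2 using Im_c[of "Suc N"] by (simp add: algebra_simps power2_eq_square)
  with Suc show ?case by (simp add: algebra_simps)
qed simp

lemma green_identity_three_term_sol:
  assumes "\<And>n. Im (c n) = \<epsilon>"
  shows "\<epsilon> * (\<Sum>n\<in>{1..N}. (cmod (three_term_sol c a b n))\<^sup>2)
     = Im (three_term_sol c a b (Suc N) * cnj (three_term_sol c a b N)) - Im (b * cnj a)"
  using green_identity[of "three_term_sol c a b" c \<epsilon> N] three_term_sol_step[of _ c a b] assms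
  by (simp only: One_nat_def three_term_sol.simps(1,2))

lemma three_term_sol_Dirichlet_nonzero:
  assumes "\<And>n. Im (c n) = \<epsilon>" and "\<epsilon> > 0"
  shows "three_term_sol c 0 1 (Suc M) \<noteq> 0"
proof
  assume zero: "three_term_sol c 0 1 (Suc M) = 0"
  have "\<epsilon> * (\<Sum>n\<in>{1..M}. (cmod (three_term_sol c 0 1 n))\<^sup>2) = 0"
    using green_identity_three_term_sol[where c=c and \<epsilon>=\<epsilon> and N=M and a=0 and b=1] zero assms(1) by simp
  with \<open>\<epsilon> > 0\<close> have "\<forall>n\<in>{1..M}. three_term_sol c 0 1 n = 0"
    by (simp add: sum_nonneg_eq_0_iff)
  with zero show False by (cases M) (auto dest: bspec[of _ _ 1])
qed

text \<open>Choosing \<open>m\<close> so that the solution vanishes at \<open>M + 1\<close> turns Green's identity into an equality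
  with right-hand side \<open>Im m\<close>; the case \<open>N = 1\<close> confines \<open>m\<close> to a disc independent of \<open>M\<close>.\<close>
lemma finite_weyl_point:
  assumes Im_c: "\<And>n. Im (c n) = \<epsilon>" and \<epsilon>: "\<epsilon> > 0" and M: "M \<ge> 1"
  obtains m where "cmod m \<le> 1 / \<epsilon>"
    and "\<And>N. N \<le> M \<Longrightarrow> \<epsilon> * (\<Sum>n\<in>{1..N}. (cmod (three_term_sol c 1 (-m) n))\<^sup>2) \<le> Im m"
proof -
  define m where "m = three_term_sol c 1 0 (Suc M) / three_term_sol c 0 1 (Suc M)"
  have "three_term_sol c 1 (-m) (Suc M) = three_term_sol c 1 0 (Suc M) - m * three_term_sol c 0 1 (Suc M)"
    by (simp add: three_term_sol_linear[of c 1 "-m"])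
  also have "\<dots> = 0"
    using three_term_sol_Dirichlet_nonzero[of c \<epsilon> M, OF Im_c \<epsilon>] by (simp add: m_def)
  finally have "three_term_sol c 1 (-m) (Suc M) = 0" .
  then have full: "\<epsilon> * (\<Sum>n\<in>{1..M}. (cmod (three_term_sol c 1 (-m) n))\<^sup>2) = Im m"
    using green_identity_three_term_sol[where c=c and \<epsilon>=\<epsilon> and N=M and a=1 and b="-m"] Im_c by simp
  have partial: "\<epsilon> * (\<Sum>n\<in>{1..N}. (cmod (three_term_sol c 1 (-m) n))\<^sup>2) \<le> Im m" if "N \<le> M" for N
    unfolding full[symmetric] using \<epsilon> that by (intro mult_left_mono sum_mono2) auto
  have "\<epsilon> * (cmod m)\<^sup>2 \<le> cmod m"
    using partial[of 1] M abs_Im_le_cmod[of m] by simp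
  then have "\<epsilon> * cmod m \<le> 1"
    by (cases "m = 0") (auto simp: power2_eq_square)
  with \<epsilon> have "cmod m \<le> 1 / \<epsilon>" by (simp add: field_simps)
  with partial show thesis using that by blast
qed

lemma weyl_limit_point:
  assumes Im_c: "\<And>n. Im (c n) = \<epsilon>" and \<epsilon>: "\<epsilon> > 0"
  obtains m where "\<And>N. \<epsilon> * (\<Sum>n\<in>{1..N}. (cmod (three_term_sol c 1 (-m) n))\<^sup>2) \<le> Im m"
proof -
  define a b where "a = three_term_sol c 1 0" and "b = three_term_sol c 0 1"
  define F where "F N m = \<epsilon> * (\<Sum>n\<in>{1..N}. (cmod (a n - m * b n))\<^sup>2) - Im m" for N m
  have sol: "three_term_sol c 1 (-m) n = a n - m * b n" for m n
    using three_term_sol_linear[of c 1 "-m" n] by (simp add: a_def b_def)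
  have "\<exists>w. cmod w \<le> 1 / \<epsilon> \<and> (\<forall>N \<le> Suc M. F N w \<le> 0)" for M
  proof -
    obtain w where "cmod w \<le> 1 / \<epsilon>"
      "\<And>N. N \<le> Suc M \<Longrightarrow> \<epsilon> * (\<Sum>n\<in>{1..N}. (cmod (three_term_sol c 1 (-w) n))\<^sup>2) \<le> Im w"
      using finite_weyl_point[of c \<epsilon> "Suc M", OF Im_c \<epsilon>] by auto
    then show ?thesis by (auto simp: F_def sol)
  qed
  then obtain w where w: "\<And>M. w M \<in> cball 0 (1 / \<epsilon>)" "\<And>M N. N \<le> Suc M \<Longrightarrow> F N (w M) \<le> 0"
    by (metis mem_cball_0)
  then obtain m r where r: "strict_mono (r :: nat \<Rightarrow> nat)" and lim: "(w \<circ> r) \<longlonglongrightarrow> m"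
    using compact_imp_seq_compact[OF compact_cball] by (metis seq_compactE)
  have "F N m \<le> 0" for N
  proof (rule LIMSEQ_le_const2)
    show "(\<lambda>M. F N ((w \<circ> r) M)) \<longlonglongrightarrow> F N m"
      unfolding F_def by (intro tendsto_intros lim)
    show "\<exists>M0. \<forall>M\<ge>M0. F N ((w \<circ> r) M) \<le> 0"
      using seq_suble[OF r] by (intro exI[of _ N] allI impI) (auto intro: w(2) le_SucI order_trans)
  qed
  then show thesis by (intro that) (simp add: F_def sol)
qed

lemma is_eigensol_step:
  assumes "is_eigensol v \<alpha> x z u" "n \<ge> 1"
  shows "u (int (Suc n)) = (z - of_real (v (x + real n * \<alpha>))) * u (int n) - u (int (n - 1))"
proof -
  have eq: "u (int n + 1) + u (int n - 1) + complex_of_real (v (x + real_of_int (int n) * \<alpha>)) * u (int n) = z * u (int n)"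
    using assms(1) unfolding is_eigensol_def by blast
  have solved: "u (int n + 1) = (z - complex_of_real (v (x + real_of_int (int n) * \<alpha>))) * u (int n) - u (int n - 1)"
    using eq by algebra
  have pred_eq: "int n - 1 = int (n - 1)" using assms(2) by simp
  have succ_eq: "int (Suc n) = int n + 1" by simp
  show ?thesis unfolding succ_eq using solved unfolding pred_eq by simp
qed

lemma is_eigensol_initial_zero:
  assumes eig: "is_eigensol v \<alpha> x z u" and "u 0 = 0" "u 1 = 0"
  shows "u = (\<lambda>_. 0)"
proof
  define w where "w n = z - of_real (v (x + real_of_int n * \<alpha>))" for n
  have rel: "u (n + 1) + u (n - 1) = w n * u n" for n
    using eig unfolding is_eigensol_def w_def left_diff_distrib eq_diff_eq by blast
  have nonneg: "u (int k) = 0 \<and> u (int k + 1) = 0" for k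
  proof (induction k)
    case (Suc k)
    then show ?case using rel[of "int k + 1"] by (simp add: ac_simps)
  qed (use assms in simp)
  have neg: "u (- int k) = 0 \<and> u (- int k + 1) = 0" for k
  proof (induction k)
    case (Suc k)
    have "- int (Suc k) = - int k - 1" "- int (Suc k) + 1 = - int k" by simp_all
    with Suc show ?case using rel[of "- int k"] by (simp only:) simp
  qed (use assms in simp)
  fix n :: int
  show "u n = 0"
    using nonneg[of "nat n"] neg[of "nat (- n)"] by (cases "n \<ge> 0") simp_all
qed

lemma l2_at_plus_infty_tendsto_zero:
  assumes "l2_at_plus_infty u"
  shows "(\<lambda>n. u (int n)) \<longlonglongrightarrow> 0"
proof -
  have "(\<lambda>n. (cmod (u (int n)))\<^sup>2) \<longlonglongrightarrow> 0"
    using assms summable_LIMSEQ_zero unfolding l2_at_plus_infty_def by blast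
  then have "(\<lambda>n. sqrt ((cmod (u (int n)))\<^sup>2)) \<longlonglongrightarrow> sqrt 0"
    by (intro tendsto_intros)
  then show ?thesis by (simp add: tendsto_norm_zero_iff)
qed

lemma green_tail_bound:
  fixes u c :: "nat \<Rightarrow> complex"
  assumes step: "\<And>n. n \<ge> 1 \<Longrightarrow> u (Suc n) = c n * u n - u (n - 1)"
    and Im_c: "\<And>n. Im (c n) = \<epsilon>" and "\<epsilon> > 0" and lim: "u \<longlonglongrightarrow> 0"
  shows "\<epsilon> * (\<Sum>n\<in>{1..N}. (cmod (u n))\<^sup>2) \<le> - Im (u 1 * cnj (u 0))"
proof -
  have "(\<lambda>M. Im (u (Suc M) * cnj (u M))) \<longlonglongrightarrow> Im (0 * cnj 0)"
    using lim by (intro tendsto_intros LIMSEQ_Suc)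
  moreover have "\<epsilon> * (\<Sum>n\<in>{1..N}. (cmod (u n))\<^sup>2) + Im (u 1 * cnj (u 0)) \<le> Im (u (Suc M) * cnj (u M))"
    if "M \<ge> N" for M
  proof -
    have "\<epsilon> * (\<Sum>n\<in>{1..N}. (cmod (u n))\<^sup>2) \<le> \<epsilon> * (\<Sum>n\<in>{1..M}. (cmod (u n))\<^sup>2)"
      using \<open>\<epsilon> > 0\<close> that by (intro mult_left_mono sum_mono2) auto
    also have "\<dots> = Im (u (Suc M) * cnj (u M)) - Im (u 1 * cnj (u 0))"
      by (rule green_identity[OF step Im_c])
    finally show ?thesis by simp
  qed
  ultimately have "\<epsilon> * (\<Sum>n\<in>{1..N}. (cmod (u n))\<^sup>2) + Im (u 1 * cnj (u 0)) \<le> 0"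
    by (intro LIMSEQ_le_const) auto
  then show ?thesis by simp
qed

definition weyl_sol :: "(real \<Rightarrow> real) \<Rightarrow> real \<Rightarrow> real \<Rightarrow> complex \<Rightarrow> (int \<Rightarrow> complex) \<Rightarrow> bool" where
  "weyl_sol v \<alpha> x z u \<longleftrightarrow> u \<noteq> (\<lambda>_. 0) \<and> is_eigensol v \<alpha> x z u \<and> l2_at_plus_infty u"

lemma weyl_sol_step:
  assumes "weyl_sol v \<alpha> x z u" "n \<ge> 1"
  shows "u (int (Suc n)) = (z - of_real (v (x + real n * \<alpha>))) * u (int n) - u (int (n - 1))"
  using assms is_eigensol_step unfolding weyl_sol_def by blast

lemma weyl_sol_tendsto_zero: "weyl_sol v \<alpha> x z u \<Longrightarrow> (\<lambda>n. u (int n)) \<longlonglongrightarrow> 0"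
  unfolding weyl_sol_def by (blast intro: l2_at_plus_infty_tendsto_zero)

lemma weyl_sol_nonzero_at_0:
  assumes z: "Im z > 0" and u: "weyl_sol v \<alpha> x z u"
  shows "u 0 \<noteq> 0"
proof
  assume u0: "u 0 = 0"
  have "Im z * (\<Sum>n\<in>{1..1}. (cmod (u (int n)))\<^sup>2) \<le> - Im (u (int 1) * cnj (u (int 0)))"
    using weyl_sol_step[OF u] weyl_sol_tendsto_zero[OF u] z
    by (intro green_tail_bound[where c="\<lambda>n. z - of_real (v (x + real n * \<alpha>))"]) auto
  with z u0 have "u 1 = 0" by (simp add: mult_le_0_iff)
  with u0 u show False
    using is_eigensol_initial_zero unfolding weyl_sol_def by blast
qed

lemma weyl_sol_ratio_unique:
  assumes z: "Im z > 0" and u: "weyl_sol v \<alpha> x z u" and w: "weyl_sol v \<alpha> x z w"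
  shows "u 1 / u 0 = w 1 / w 0"
proof -
  define U V where "U n = u (int n)" and "V n = w (int n)" for n
  define W where "W n = U (Suc n) * V n - U n * V (Suc n)" for n
  define c where "c n = z - of_real (v (x + real n * \<alpha>))" for n
  have rec: "U (Suc (Suc n)) = c (Suc n) * U (Suc n) - U n" "V (Suc (Suc n)) = c (Suc n) * V (Suc n) - V n" for n
    using weyl_sol_step[OF u, of "Suc n"] weyl_sol_step[OF w, of "Suc n"] by (simp_all add: U_def V_def c_def)
  have "W (Suc n) = W n" for n
    unfolding W_def rec by (simp add: algebra_simps)
  then have "W n = W 0" for n by (induction n) simp_all
  then have "W \<longlonglongrightarrow> W 0" by (intro tendsto_eventually) simp
  moreover have "W \<longlonglongrightarrow> 0 * 0 - 0 * 0"
    unfolding W_def using weyl_sol_tendsto_zero[OF u, folded U_def] weyl_sol_tendsto_zero[OF w, folded V_def]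
    by (intro tendsto_intros LIMSEQ_Suc)
  ultimately have "W 0 = 0" by (simp add: LIMSEQ_unique)
  with weyl_sol_nonzero_at_0[OF z u] weyl_sol_nonzero_at_0[OF z w] show ?thesis
    by (simp add: W_def U_def V_def field_simps)
qed

lemma weyl_sol_bound:
  assumes z: "Im z > 0" and u: "weyl_sol v \<alpha> x z u"
  defines "c \<equiv> \<lambda>n. z - of_real (v (x + real n * \<alpha>))" and "m \<equiv> - u 1 / u 0"
  shows "Im z * (\<Sum>n\<in>{1..N}. (cmod (three_term_sol c 1 (-m) n))\<^sup>2) \<le> Im m"
proof -
  have u0: "u 0 \<noteq> 0" by (rule weyl_sol_nonzero_at_0[OF z u])
  define U where "U n = u (int n) / u 0" for n
  have step: "U (Suc n) = c n * U n - U (n - 1)" if "n \<ge> 1" for n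
    using weyl_sol_step[OF u that] by (simp add: U_def c_def diff_divide_distrib)
  have "U 0 = 1" "U 1 = -m" using u0 by (simp_all add: U_def m_def)
  then have U: "U n = three_term_sol c 1 (-m) n" for n
    using three_term_sol_unique[of U c n, OF step] by simp
  have "(\<lambda>n. u (int n) / u 0) \<longlonglongrightarrow> 0 / u 0"
    using weyl_sol_tendsto_zero[OF u] u0 by (intro tendsto_intros)
  then have "U \<longlonglongrightarrow> 0" by (simp add: U_def[abs_def])
  then have "Im z * (\<Sum>n\<in>{1..N}. (cmod (U n))\<^sup>2) \<le> - Im (U 1 * cnj (U 0))"
    using z by (intro green_tail_bound[OF step]) (simp_all add: c_def)
  then show ?thesis by (simp add: U)
qed

lemma is_eigensol_from_half_line:
  assumes step: "\<And>n. n \<ge> 1 \<Longrightarrow> f (Suc n) = (z - of_real (v (x + real n * \<alpha>))) * f n - f (n - 1)"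
  obtains u where "is_eigensol v \<alpha> x z u" and "\<And>n. u (int n) = f n"
proof -
  \<comment> \<open>\<open>g k = u (-k)\<close> solves the reflected recurrence; its initial values are forced by the
    equation at \<open>n = 0\<close>.\<close>
  define c' where "c' k = z - of_real (v (x - real k * \<alpha>))" for k
  define g where "g = three_term_sol c' (f 0) ((z - of_real (v x)) * f 0 - f 1)"
  define u where "u n = (if n \<ge> 0 then f (nat n) else g (nat (- n)))" for n :: int
  have "u (n + 1) + u (n - 1) + of_real (v (x + real_of_int n * \<alpha>)) * u n = z * u n" for n
  proof (cases "n \<ge> 1")
    case True
    define k where "k = nat n"
    with True have k: "n = int k" "k \<ge> 1" by simp_all
    then have "u (n + 1) = f (Suc k)" "u (n - 1) = f (k - 1)" "u n = f k"
      by (simp_all add: u_def nat_diff_distrib' nat_add_distrib)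
    with step[OF k(2)] k(1) show ?thesis by (simp add: algebra_simps)
  next
    case False
    show ?thesis
    proof (cases "n = 0")
      case True
      then show ?thesis by (simp add: u_def g_def algebra_simps)
    next
      case False
      define k where "k = nat (- n)"
      with \<open>n \<noteq> 0\<close> \<open>\<not> n \<ge> 1\<close> have k: "n = - int k" "k \<ge> 1" by simp_all
      have "u (n + 1) = g (k - 1)"
        using k by (cases "k = 1") (simp_all add: u_def g_def nat_diff_distrib')
      moreover have "u (n - 1) = g (Suc k)" "u n = g k" "v (x + real_of_int n * \<alpha>) = v (x - real k * \<alpha>)"
        using k by (simp_all add: u_def nat_add_distrib)
      ultimately show ?thesis
        using three_term_sol_step[OF k(2), of c'] by (simp add: g_def c'_def algebra_simps)
    qed
  qed
  then show thesis by (intro that[of u]) (simp_all add: is_eigensol_def u_def)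
qed

lemma weyl_sol_exists:
  assumes z: "Im z > 0"
  obtains u where "weyl_sol v \<alpha> x z u"
proof -
  define c where "c n = z - of_real (v (x + real n * \<alpha>))" for n
  have Im_c: "Im (c n) = Im z" for n by (simp add: c_def)
  obtain m where m: "\<And>N. Im z * (\<Sum>n\<in>{1..N}. (cmod (three_term_sol c 1 (-m) n))\<^sup>2) \<le> Im m"
    using weyl_limit_point[of c "Im z", OF Im_c z] by blast
  define f where "f = three_term_sol c 1 (-m)"
  obtain u where eig: "is_eigensol v \<alpha> x z u" and u: "\<And>n. u (int n) = f n"
    using is_eigensol_from_half_line[of f z v x \<alpha>] three_term_sol_step[of _ c 1 "-m"]
    unfolding f_def c_def by blast
  have "(\<Sum>i<n. (cmod (u (int i)))\<^sup>2) \<le> 1 + Im m / Im z" for n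
  proof -
    have "(\<Sum>i<n. (cmod (u (int i)))\<^sup>2) \<le> (\<Sum>i\<in>{0..n}. (cmod (f i))\<^sup>2)"
      unfolding u by (intro sum_mono2) auto
    also have "\<dots> = 1 + (\<Sum>i\<in>{1..n}. (cmod (f i))\<^sup>2)"
      by (simp add: sum.atLeast_Suc_atMost f_def)
    also have "(\<Sum>i\<in>{1..n}. (cmod (f i))\<^sup>2) \<le> Im m / Im z"
      using m[of n] z unfolding f_def by (simp add: field_simps mult.commute)
    finally show ?thesis by simp
  qed
  then have "l2_at_plus_infty u"
    unfolding l2_at_plus_infty_def by (intro summableI_nonneg_bounded) auto
  moreover have "u \<noteq> (\<lambda>_. 0)"
    using u[of 0] by (auto simp: f_def)
  ultimately show thesis using eig by (intro that) (simp add: weyl_sol_def)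
qed

lemma m_plus_eq:
  assumes z: "Im z > 0" and u: "weyl_sol v \<alpha> x z u"
  shows "m_plus v \<alpha> x z = - u 1 / u 0"
  unfolding m_plus_def
proof (rule the_equality)
  show "\<exists>w. w \<noteq> (\<lambda>_. 0) \<and> is_eigensol v \<alpha> x z w \<and> l2_at_plus_infty w \<and> - u 1 / u 0 = - w 1 / w 0"
    using u unfolding weyl_sol_def by blast
  show "m = - u 1 / u 0" if "\<exists>w. w \<noteq> (\<lambda>_. 0) \<and> is_eigensol v \<alpha> x z w \<and> l2_at_plus_infty w \<and> m = - w 1 / w 0" for m
    using that weyl_sol_ratio_unique[OF z _ u] unfolding weyl_sol_def by auto
qed

lemma m_plus_bound:
  assumes z: "Im z > 0"
  shows "Im z * (\<Sum>n\<in>{1..N}. (cmod (three_term_sol (\<lambda>n. z - of_real (v (x + real n * \<alpha>))) 1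
           (- m_plus v \<alpha> x z) n))\<^sup>2) \<le> Im (m_plus v \<alpha> x z)"
proof -
  obtain u where u: "weyl_sol v \<alpha> x z u" using weyl_sol_exists[OF z] .
  then have "m_plus v \<alpha> x z = - u 1 / u 0" by (rule m_plus_eq[OF z])
  then show ?thesis using weyl_sol_bound[OF z u] by (simp only:)
qed

text \<open>The kernel of the discrete variation-of-parameters formula.\<close>
definition green_kernel :: "(nat \<Rightarrow> 'a::comm_ring_1) \<Rightarrow> nat \<Rightarrow> nat \<Rightarrow> 'a" where
  "green_kernel c n j = three_term_sol c 0 1 n * three_term_sol c 1 0 j - three_term_sol c 1 0 n * three_term_sol c 0 1 j"

lemma green_kernel_diag [simp]: "green_kernel c n n = 0"
  by (simp add: green_kernel_def mult.commute)

lemma green_kernel_Suc_right [simp]: "green_kernel c n (Suc n) = -1"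
  using three_term_sol_wronskian[of c n] by (simp add: green_kernel_def algebra_simps)

lemma green_kernel_step:
  "green_kernel c (Suc (Suc n)) j = c (Suc n) * green_kernel c (Suc n) j - green_kernel c n j"
  by (simp add: green_kernel_def algebra_simps)

lemma green_kernel_sum_step:
  fixes c :: "nat \<Rightarrow> real" and u :: "nat \<Rightarrow> complex"
  defines "S \<equiv> \<lambda>n. \<Sum>j\<in>{1..<n}. of_real (green_kernel c n j) * u j"
  shows "S (Suc (Suc n)) = of_real (c (Suc n)) * S (Suc n) - S n + u (Suc n)"
proof -
  have shift: "(\<Sum>j\<in>{1..<Suc k}. of_real (green_kernel c k j) * u j) = S k" for k
    by (simp add: S_def atLeastLessThanSuc)
  have "S (Suc (Suc n)) = (\<Sum>j\<in>{1..<Suc (Suc n)}.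
      of_real (c (Suc n)) * (of_real (green_kernel c (Suc n) j) * u j) - of_real (green_kernel c n j) * u j)"
    unfolding S_def green_kernel_step by (simp add: algebra_simps)
  also have "\<dots> = of_real (c (Suc n)) * S (Suc n) - (S n - u (Suc n))"
    by (simp add: sum_subtractf sum_distrib_left[symmetric] shift del: sum.op_ivl_Suc)
      (simp add: shift[symmetric])
  finally show ?thesis by simp
qed

lemma variation_of_parameters:
  fixes c :: "nat \<Rightarrow> real" and e :: real and m :: complex
  defines "u \<equiv> three_term_sol (\<lambda>n. of_real (c n) + \<i> * of_real e) 1 (-m)"
  shows "u n = - m * of_real (three_term_sol c 0 1 n) + of_real (three_term_sol c 1 0 n)
    + \<i> * of_real e * (\<Sum>j\<in>{1..<n}. of_real (green_kernel c n j) * u j)"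
proof -
  define S where "S n = (\<Sum>j\<in>{1..<n}. of_real (green_kernel c n j) * u j)" for n
  define D where "D n = u n - (- m * of_real (three_term_sol c 0 1 n) + of_real (three_term_sol c 1 0 n))" for n
  have D_step: "D (Suc (Suc n)) = of_real (c (Suc n)) * D (Suc n) - D n + \<i> * of_real e * u (Suc n)" for n
    by (simp add: D_def u_def algebra_simps)
  have S_step: "S (Suc (Suc n)) = of_real (c (Suc n)) * S (Suc n) - S n + u (Suc n)" for n
    unfolding S_def by (rule green_kernel_sum_step)
  have "D n = \<i> * of_real e * S n \<and> D (Suc n) = \<i> * of_real e * S (Suc n)"
  proof (induction n)
    case 0
    then show ?case by (simp add: D_def S_def u_def)
  next
    case (Suc n)
    then show ?case by (simp add: D_step S_step algebra_simps)
  qed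
  then have "D n = \<i> * of_real e * S n" ..
  then show ?thesis unfolding D_def S_def by (simp add: algebra_simps)
qed

lemma sum_lagrange_identity:
  fixes f g :: "nat \<Rightarrow> real"
  shows "(\<Sum>n\<in>{1..L}. \<Sum>j\<in>{1..<n}. (f n * g j - g n * f j)\<^sup>2)
        = (\<Sum>n\<in>{1..L}. f n * f n) * (\<Sum>n\<in>{1..L}. g n * g n) - (\<Sum>n\<in>{1..L}. f n * g n)\<^sup>2"
proof (induction L)
  case (Suc L)
  have "{1..<Suc L} = {1..L}" by auto
  moreover have "(\<Sum>j\<in>{1..L}. (f (Suc L) * g j - g (Suc L) * f j)\<^sup>2)
     = (f (Suc L))\<^sup>2 * (\<Sum>j\<in>{1..L}. g j * g j) - 2 * f (Suc L) * g (Suc L) * (\<Sum>j\<in>{1..L}. f j * g j)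
       + (g (Suc L))\<^sup>2 * (\<Sum>j\<in>{1..L}. f j * f j)"
    by (simp add: power2_eq_square algebra_simps sum.distrib sum_subtractf sum_distrib_left)
  ultimately show ?case using Suc
    by (simp only: sum.cl_ivl_Suc) (simp add: power2_eq_square algebra_simps)
qed simp

lemma norm_sum_of_real_mult_sq_le:
  fixes a :: "'i \<Rightarrow> real" and z :: "'i \<Rightarrow> complex"
  shows "(cmod (\<Sum>j\<in>A. of_real (a j) * z j))\<^sup>2 \<le> (\<Sum>j\<in>A. (a j)\<^sup>2) * (\<Sum>j\<in>A. (cmod (z j))\<^sup>2)"
proof -
  have "cmod (\<Sum>j\<in>A. of_real (a j) * z j) \<le> (\<Sum>j\<in>A. \<bar>a j\<bar> * cmod (z j))"
    by (rule order_trans[OF norm_sum]) (simp add: norm_mult)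
  then have "(cmod (\<Sum>j\<in>A. of_real (a j) * z j))\<^sup>2 \<le> (\<Sum>j\<in>A. \<bar>a j\<bar> * cmod (z j))\<^sup>2"
    by (simp add: power_mono)
  also have "\<dots> \<le> (\<Sum>j\<in>A. \<bar>a j\<bar>\<^sup>2) * (\<Sum>j\<in>A. (cmod (z j))\<^sup>2)"
    by (rule Cauchy_Schwarz_ineq_sum)
  finally show ?thesis by simp
qed

text \<open>The Hermitian form of the matrix with rows \<open>(p, q)\<close>, \<open>(q, r)\<close> at the vector \<open>(-m, 1)\<close>.\<close>
definition herm_form :: "real \<Rightarrow> real \<Rightarrow> real \<Rightarrow> complex \<Rightarrow> real" where
  "herm_form p q r m = (cmod m)\<^sup>2 * p - 2 * Re m * q + r"

lemma sum_norm_sq_eq_herm_form: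
  "(\<Sum>n\<in>A. (cmod (- m * of_real (f n) + of_real (g n)))\<^sup>2)
     = herm_form (\<Sum>n\<in>A. f n * f n) (\<Sum>n\<in>A. f n * g n) (\<Sum>n\<in>A. g n * g n) m"
proof -
  have "(cmod (- m * of_real (f n) + of_real (g n)))\<^sup>2 = (cmod m)\<^sup>2 * (f n * f n) - 2 * Re m * (f n * g n) + g n * g n" for n
    by (simp add: cmod_power2) (simp add: power2_eq_square algebra_simps)
  then show ?thesis
    by (simp add: herm_form_def sum.distrib sum_subtractf sum_distrib_left)
qed

lemma sum_norm_green_sum_sq_le:
  fixes c :: "nat \<Rightarrow> real" and u :: "nat \<Rightarrow> complex"
  shows "(\<Sum>n\<in>{1..L}. (cmod (\<Sum>j\<in>{1..<n}. of_real (green_kernel c n j) * u j))\<^sup>2)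
     \<le> ((\<Sum>n\<in>{1..L}. three_term_sol c 0 1 n * three_term_sol c 0 1 n) * (\<Sum>n\<in>{1..L}. three_term_sol c 1 0 n * three_term_sol c 1 0 n)
         - (\<Sum>n\<in>{1..L}. three_term_sol c 0 1 n * three_term_sol c 1 0 n)\<^sup>2) * (\<Sum>n\<in>{1..L}. (cmod (u n))\<^sup>2)"
proof -
  define S where "S = (\<Sum>n\<in>{1..L}. (cmod (u n))\<^sup>2)"
  have "(cmod (\<Sum>j\<in>{1..<n}. of_real (green_kernel c n j) * u j))\<^sup>2 \<le> (\<Sum>j\<in>{1..<n}. (green_kernel c n j)\<^sup>2) * S"
    if "n \<in> {1..L}" for n
  proof -
    have "(\<Sum>j\<in>{1..<n}. (cmod (u j))\<^sup>2) \<le> S"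
      unfolding S_def using that by (intro sum_mono2) auto
    then show ?thesis
      by (rule order_trans[OF norm_sum_of_real_mult_sq_le mult_left_mono]) (simp add: sum_nonneg)
  qed
  then have "(\<Sum>n\<in>{1..L}. (cmod (\<Sum>j\<in>{1..<n}. of_real (green_kernel c n j) * u j))\<^sup>2)
      \<le> (\<Sum>n\<in>{1..L}. \<Sum>j\<in>{1..<n}. (green_kernel c n j)\<^sup>2) * S"
    unfolding sum_distrib_right by (rule sum_mono)
  then show ?thesis
    unfolding green_kernel_def sum_lagrange_identity S_def .
qed

lemma herm_form_le_sum_norm_sq:
  fixes c :: "nat \<Rightarrow> real" and e :: real and m :: complex and L :: nat
  defines "u \<equiv> three_term_sol (\<lambda>n. of_real (c n) + \<i> * of_real e) 1 (-m)"
    and "p \<equiv> \<Sum>n\<in>{1..L}. three_term_sol c 0 1 n * three_term_sol c 0 1 n"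
    and "q \<equiv> \<Sum>n\<in>{1..L}. three_term_sol c 0 1 n * three_term_sol c 1 0 n"
    and "r \<equiv> \<Sum>n\<in>{1..L}. three_term_sol c 1 0 n * three_term_sol c 1 0 n"
  assumes det: "4 * e\<^sup>2 * (p * r - q\<^sup>2) = 1"
  shows "herm_form p q r m \<le> 9/4 * (\<Sum>n\<in>{1..L}. (cmod (u n))\<^sup>2)"
proof -
  define \<phi> \<theta> where "\<phi> = three_term_sol c 0 1" and "\<theta> = three_term_sol c 1 0"
  define S where "S = (\<Sum>n\<in>{1..L}. (cmod (u n))\<^sup>2)"
  define d where "d n = \<i> * of_real e * (\<Sum>j\<in>{1..<n}. of_real (green_kernel c n j) * u j)" for n
  have "(cmod (d n))\<^sup>2 = e\<^sup>2 * (cmod (\<Sum>j\<in>{1..<n}. of_real (green_kernel c n j) * u j))\<^sup>2" for n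
    unfolding d_def norm_mult power_mult_distrib by simp
  then have "(\<Sum>n\<in>{1..L}. (cmod (d n))\<^sup>2) = e\<^sup>2 * (\<Sum>n\<in>{1..L}. (cmod (\<Sum>j\<in>{1..<n}. of_real (green_kernel c n j) * u j))\<^sup>2)"
    by (simp add: sum_distrib_left)
  also have "\<dots> \<le> e\<^sup>2 * ((p * r - q\<^sup>2) * S)"
    unfolding p_def q_def r_def S_def by (intro mult_left_mono sum_norm_green_sum_sq_le) simp
  also have "\<dots> = S / 4"
    using det by (simp add: field_simps)
  finally have sum_d: "(\<Sum>n\<in>{1..L}. (cmod (d n))\<^sup>2) \<le> S / 4" .
  have "(cmod (- m * of_real (\<phi> n) + of_real (\<theta> n)))\<^sup>2 \<le> 3/2 * (cmod (u n))\<^sup>2 + 3 * (cmod (d n))\<^sup>2" for n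
  proof -
    have "- m * of_real (\<phi> n) + of_real (\<theta> n) = u n - d n"
      using variation_of_parameters[of c e m n] by (simp add: u_def d_def \<phi>_def \<theta>_def)
    then have "cmod (- m * of_real (\<phi> n) + of_real (\<theta> n)) \<le> cmod (u n) + cmod (d n)"
      by (simp add: norm_triangle_ineq4)
    then have "(cmod (- m * of_real (\<phi> n) + of_real (\<theta> n)))\<^sup>2 \<le> (cmod (u n) + cmod (d n))\<^sup>2"
      by (simp add: power_mono)
    also have "\<dots> \<le> 3/2 * (cmod (u n))\<^sup>2 + 3 * (cmod (d n))\<^sup>2"
      using zero_le_power2[of "cmod (u n) - 2 * cmod (d n)"] by (simp add: power2_eq_square algebra_simps)
    finally show ?thesis .
  qed
  then have "herm_form p q r m \<le> (\<Sum>n\<in>{1..L}. 3/2 * (cmod (u n))\<^sup>2 + 3 * (cmod (d n))\<^sup>2)"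
    unfolding p_def q_def r_def \<phi>_def[symmetric] \<theta>_def[symmetric] sum_norm_sq_eq_herm_form[symmetric]
    by (rule sum_mono)
  also have "\<dots> = 3/2 * S + 3 * (\<Sum>n\<in>{1..L}. (cmod (d n))\<^sup>2)"
    by (simp add: S_def sum.distrib sum_distrib_left)
  also have "\<dots> \<le> 9/4 * S"
    using sum_d by simp
  finally show ?thesis by (simp add: S_def)
qed

lemma moebius_rot:
  "moebius (rot (- \<beta> / (2*pi))) z =
     (of_real (cos \<beta>) * z + of_real (sin \<beta>)) / (- of_real (sin \<beta>) * z + of_real (cos \<beta>))"
proof -
  have "2 * pi * (- \<beta> / (2 * pi)) = - \<beta>" by simp
  then show ?thesis unfolding moebius_def rot_def by simp
qed

lemma Im_moebius_rotation:
  fixes a b :: real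
  shows "Im ((of_real a * z + of_real b) / (- of_real b * z + of_real a))
     = (a\<^sup>2 + b\<^sup>2) * Im z / (cmod (of_real b * z - of_real a))\<^sup>2"
  by (simp add: Im_divide cmod_power2) (simp add: power2_eq_square algebra_simps)

lemma rotation_denominator_nonzero:
  fixes a b :: real
  assumes "Im z > 0" and "a \<noteq> 0 \<or> b \<noteq> 0"
  shows "of_real b * z - of_real a \<noteq> 0"
proof
  assume "of_real b * z - of_real a = 0"
  then have "b * Im z = 0" "b * Re z = a" by (simp_all add: complex_eq_iff)
  with assms show False by simp
qed

lemma norm_moebius_rotation_le:
  fixes a b :: real
  assumes z: "Im z > 0" and ab: "a\<^sup>2 + b\<^sup>2 = 1"
  shows "cmod ((of_real a * z + of_real b) / (- of_real b * z + of_real a)) \<le> ((cmod z)\<^sup>2 + 1) / Im z"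
proof -
  define w where "w = (of_real a * z + of_real b) / (- of_real b * z + of_real a)"
  define den where "den = (cmod (of_real b * z - of_real a))\<^sup>2"
  have "a \<noteq> 0 \<or> b \<noteq> 0" using ab by auto
  then have den: "den > 0" using rotation_denominator_nonzero[OF z] by (simp add: den_def)
  have Im_w: "Im w = Im z / den"
    unfolding w_def Im_moebius_rotation ab den_def by simp
  have "(cmod w)\<^sup>2 + 1 = ((cmod (of_real a * z + of_real b))\<^sup>2 + den) / den"
    using den by (simp add: w_def den_def norm_divide power_divide norm_minus_commute field_simps)
  also have "(cmod (of_real a * z + of_real b))\<^sup>2 + den = (a\<^sup>2 + b\<^sup>2) * ((cmod z)\<^sup>2 + 1)"
    by (simp add: den_def cmod_power2) (simp add: power2_eq_square algebra_simps)
  finally have norm_w: "(cmod w)\<^sup>2 + 1 = ((cmod z)\<^sup>2 + 1) / den" by (simp add: ab)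
  have "Im w \<le> cmod w" using abs_Im_le_cmod[of w] by linarith
  then have "cmod w * Im w \<le> (cmod w)\<^sup>2 + 1"
    by (simp add: power2_eq_square mult_left_mono add_increasing2)
  moreover have "Im w > 0" using Im_w z den by simp
  ultimately have "cmod w \<le> ((cmod w)\<^sup>2 + 1) / Im w" by (simp add: pos_le_divide_eq)
  also have "\<dots> = ((cmod z)\<^sup>2 + 1) / Im z"
    using den z by (simp add: norm_w Im_w)
  finally show ?thesis by (simp add: w_def)
qed

lemma bdd_above_norm_moebius_rot:
  assumes "Im z > 0"
  shows "bdd_above (range (\<lambda>\<beta>. cmod (moebius (rot (- \<beta> / (2 * pi))) z)))"
  unfolding moebius_rot using norm_moebius_rotation_le[OF assms]
  by (intro bdd_aboveI2[where M="((cmod z)\<^sup>2 + 1) / Im z"]) simp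

lemma psi_le:
  assumes "Im z > 0"
  shows "psi z \<le> ((cmod z)\<^sup>2 + 1) / Im z"
  unfolding psi_def moebius_rot using norm_moebius_rotation_le[OF assms]
  by (intro cSUP_least) simp_all

lemma norm_moebius_rotation_le_psi:
  fixes a b :: real
  assumes z: "Im z > 0" and ab: "a \<noteq> 0 \<or> b \<noteq> 0"
  shows "cmod ((of_real a * z + of_real b) / (- of_real b * z + of_real a)) \<le> psi z"
proof -
  define \<rho> where "\<rho> = sqrt (a\<^sup>2 + b\<^sup>2)"
  have "a\<^sup>2 + b\<^sup>2 > 0" using ab by (simp add: sum_power2_gt_zero_iff)
  then have \<rho>: "\<rho> > 0" "\<rho>\<^sup>2 = a\<^sup>2 + b\<^sup>2" by (simp_all add: \<rho>_def)
  then have "(a / \<rho>)\<^sup>2 + (b / \<rho>)\<^sup>2 = 1" using ab by (simp add: power_divide add_divide_distrib[symmetric])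
  then obtain \<beta> where \<beta>: "a / \<rho> = cos \<beta>" "b / \<rho> = sin \<beta>" by (rule sincos_total_2pi)
  have "moebius (rot (- \<beta> / (2*pi))) z = (of_real a * z + of_real b) / (- of_real b * z + of_real a)"
    using \<rho>(1) unfolding moebius_rot \<beta>[symmetric]
    by (simp add: divide_simps)
  moreover have "cmod (moebius (rot (- \<beta> / (2*pi))) z) \<le> psi z"
    unfolding psi_def by (rule cSUP_upper[OF _ bdd_above_norm_moebius_rot[OF z]]) simp
  ultimately show ?thesis by simp
qed

lemma le_psi:
  fixes a b t K :: real
  assumes z: "Im z > 0" and t: "t > 0" "t\<^sup>2 \<le> a\<^sup>2 + b\<^sup>2" and K: "K > 0"
    and den: "(cmod (of_real b * z - of_real a))\<^sup>2 \<le> t * K * Im z"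
  shows "t / K \<le> psi z"
proof -
  have "a\<^sup>2 + b\<^sup>2 > 0" using t by (smt (verit) zero_less_power2)
  then have ab: "a \<noteq> 0 \<or> b \<noteq> 0" by auto
  then have den_pos: "(cmod (of_real b * z - of_real a))\<^sup>2 > 0"
    using rotation_denominator_nonzero[OF z] by simp
  have "t / K = t\<^sup>2 * Im z / (t * K * Im z)"
    using t z K by (simp add: power2_eq_square)
  also have "\<dots> \<le> (a\<^sup>2 + b\<^sup>2) * Im z / (cmod (of_real b * z - of_real a))\<^sup>2"
    using t z K den den_pos by (intro frac_le mult_right_mono) auto
  also have "\<dots> = Im ((of_real a * z + of_real b) / (- of_real b * z + of_real a))"
    by (rule Im_moebius_rotation[symmetric])
  also have "\<dots> \<le> cmod ((of_real a * z + of_real b) / (- of_real b * z + of_real a))"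
    using abs_Im_le_cmod by (rule order_trans[rotated]) simp
  also have "\<dots> \<le> psi z"
    by (rule norm_moebius_rotation_le_psi[OF z ab])
  finally show ?thesis .
qed

lemma herm_form_mult_left:
  "p * herm_form p q r m = (cmod (of_real p * m - of_real q))\<^sup>2 + (p * r - q\<^sup>2)"
  by (simp add: herm_form_def cmod_power2) (simp add: power2_eq_square algebra_simps)

lemma herm_form_mult_right:
  "r * herm_form p q r m = (cmod (of_real q * m - of_real r))\<^sup>2 + (p * r - q\<^sup>2) * (cmod m)\<^sup>2"
  by (simp add: herm_form_def cmod_power2) (simp add: power2_eq_square algebra_simps)

lemma Im_pos_of_herm_form_le:
  assumes "p > 0" "p * r - q\<^sup>2 > 0" "K > 0" "herm_form p q r m \<le> K * Im m"
  shows "Im m > 0"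
proof -
  have "p * herm_form p q r m > 0"
    using assms(2) by (simp add: herm_form_mult_left add_nonneg_pos)
  with assms(1,3,4) show ?thesis
    by (smt (verit) zero_less_mult_iff)
qed

lemma psi_le_of_herm_form_le:
  assumes p: "p > 0" and r: "r > 0" and \<Delta>: "p * r - q\<^sup>2 > 0" and K: "K > 0"
    and le: "herm_form p q r m \<le> K * Im m"
  shows "psi m \<le> (p + r) * K / (p * r - q\<^sup>2)"
proof -
  have m: "Im m > 0" by (rule Im_pos_of_herm_form_le[OF p \<Delta> K le])
  have "(p * r - q\<^sup>2) * ((cmod m)\<^sup>2 + 1) \<le> p * herm_form p q r m + r * herm_form p q r m"
    unfolding herm_form_mult_left herm_form_mult_right by (simp add: algebra_simps)
  also have "\<dots> \<le> (p + r) * (K * Im m)"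
    using le p r by (simp add: distrib_right mult_left_mono add_mono)
  finally have "((cmod m)\<^sup>2 + 1) / Im m \<le> (p + r) * K / (p * r - q\<^sup>2)"
    using m \<Delta> by (simp add: field_simps)
  with psi_le[OF m] show ?thesis by linarith
qed

lemma le_psi_of_herm_form_le:
  assumes p: "p > 0" and r: "r > 0" and \<Delta>: "p * r - q\<^sup>2 > 0" and K: "K > 0"
    and le: "herm_form p q r m \<le> K * Im m"
  shows "max p r / K \<le> psi m"
proof -
  have m: "Im m > 0" by (rule Im_pos_of_herm_form_le[OF p \<Delta> K le])
  have "(cmod (of_real p * m - of_real q))\<^sup>2 \<le> p * K * Im m"
    using \<Delta> le p by (smt (verit) herm_form_mult_left mult.assoc mult_left_mono)
  then have "p / K \<le> psi m" using m p K by (intro le_psi[where a=q and b=p]) auto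
  moreover have "(cmod (of_real q * m - of_real r))\<^sup>2 \<le> r * K * Im m"
    using \<Delta> le r by (smt (verit) herm_form_mult_right mult.assoc mult_left_mono zero_le_mult_iff zero_le_power2)
  then have "r / K \<le> psi m" using m r K by (intro le_psi[where a=r and b=q]) auto
  ultimately show ?thesis by (simp add: max_def)
qed

lemma norm_vec2_sq: "(norm (w :: real^2))\<^sup>2 = (w$1)\<^sup>2 + (w$2)\<^sup>2"
  unfolding power2_norm_eq_inner by (simp add: inner_vec_def sum_2 power2_eq_square)

lemma matrix_vector_mult_2:
  fixes P :: "real^2^2"
  shows "(P *v w) $ 1 = P$1$1 * w$1 + P$1$2 * w$2" "(P *v w) $ 2 = P$2$1 * w$1 + P$2$2 * w$2"
  by (simp_all add: matrix_vector_mult_def sum_2)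

lemma diag_le_mat_opnorm: "\<bar>P $ i $ i\<bar> \<le> mat_opnorm P"
proof -
  have "\<bar>(P *v axis i 1) $ i\<bar> \<le> norm (P *v axis i 1)" by (rule component_le_norm_cart)
  also have "\<dots> \<le> mat_opnorm P * norm (axis i (1::real))"
    unfolding mat_opnorm_def by (rule onorm) simp
  finally show ?thesis by (simp add: matrix_vector_mult_basis column_def)
qed

lemma mat_opnorm_le_trace:
  fixes P :: "real^2^2"
  assumes sym: "P$2$1 = P$1$2" and pos: "P$1$1 > 0" "P$2$2 > 0"
    and det: "P$1$1 * P$2$2 - (P$1$2)\<^sup>2 > 0"
  shows "mat_opnorm P \<le> P$1$1 + P$2$2"
  unfolding mat_opnorm_def
proof (rule onorm_le)
  fix w :: "real^2"
  define p q r where "p = P$1$1" and "q = P$1$2" and "r = P$2$2"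
  have P: "P$1$1 = p" "P$1$2 = q" "P$2$1 = q" "P$2$2 = r" and p: "p > 0" and r: "r > 0"
    and \<Delta>: "p * r - q\<^sup>2 > 0"
    using sym pos det by (simp_all add: p_def q_def r_def)
  define a b where "a = w$1" and "b = w$2"
  define Q where "Q = p*a\<^sup>2 + 2*q*a*b + r*b\<^sup>2"
  have "(norm (P *v w))\<^sup>2 = (p + r) * Q - (p * r - q\<^sup>2) * (a\<^sup>2 + b\<^sup>2)"
    unfolding norm_vec2_sq matrix_vector_mult_2 P a_def b_def Q_def by (simp add: power2_eq_square algebra_simps)
  also have "\<dots> \<le> (p + r) * Q"
    using \<Delta> by simp
  also have "\<dots> \<le> (p + r)\<^sup>2 * (a\<^sup>2 + b\<^sup>2)"
  proof -
    have "r * ((p + r) * (a\<^sup>2 + b\<^sup>2) - Q) = (r*a - q*b)\<^sup>2 + (p * r - q\<^sup>2) * b\<^sup>2"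
      by (simp add: Q_def power2_eq_square algebra_simps)
    then have "r * ((p + r) * (a\<^sup>2 + b\<^sup>2) - Q) \<ge> 0"
      using \<Delta> by simp
    then have "Q \<le> (p + r) * (a\<^sup>2 + b\<^sup>2)"
      using r by (simp add: zero_le_mult_iff)
    then show ?thesis using p r by (simp add: power2_eq_square mult_left_mono mult.assoc)
  qed
  also have "\<dots> = ((p + r) * norm w)\<^sup>2"
    by (simp add: power_mult_distrib norm_vec2_sq a_def b_def)
  finally show "norm (P *v w) \<le> (P$1$1 + P$2$2) * norm w"
    unfolding P by (rule power2_le_imp_le) (use p r in simp)
qed

lemma Pk_symmetric: "Pk v E \<alpha> x k $ 2 $ 1 = Pk v E \<alpha> x k $ 1 $ 2"
  by (simp add: Pk_entries)

lemma Pk_diag_pos: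
  assumes "k \<ge> 1"
  shows "Pk v E \<alpha> x k $ 1 $ 1 > 0" and "Pk v E \<alpha> x k $ 2 $ 2 > 0"
proof -
  define c where "c = (\<lambda>j. E - v (x + real j * \<alpha>))"
  have "three_term_sol c 0 1 1 * three_term_sol c 0 1 1 \<le> (\<Sum>n\<in>{1..2*k}. three_term_sol c 0 1 n * three_term_sol c 0 1 n)"
    using assms by (intro member_le_sum) auto
  then show "Pk v E \<alpha> x k $ 1 $ 1 > 0" by (simp add: Pk_entries c_def)
  have "three_term_sol c 1 0 2 * three_term_sol c 1 0 2 \<le> (\<Sum>n\<in>{1..2*k}. three_term_sol c 1 0 n * three_term_sol c 1 0 n)"
    using assms by (intro member_le_sum) auto
  then show "Pk v E \<alpha> x k $ 2 $ 2 > 0" by (simp add: Pk_entries c_def numeral_2_eq_2)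
qed

lemma m_plus_herm_form_bound:
  fixes v E \<alpha> x k \<epsilon>
  defines "P \<equiv> Pk v E \<alpha> x k" and "m \<equiv> m_plus v \<alpha> x (Complex E \<epsilon>)"
  assumes \<epsilon>: "\<epsilon> > 0" and det: "4 * \<epsilon>\<^sup>2 * (P$1$1 * P$2$2 - (P$1$2)\<^sup>2) = 1"
  shows "herm_form (P$1$1) (P$1$2) (P$2$2) m \<le> 9 / (4 * \<epsilon>) * Im m"
proof -
  define c where "c = (\<lambda>j. E - v (x + real j * \<alpha>))"
  define u where "u = three_term_sol (\<lambda>n. of_real (c n) + \<i> * of_real \<epsilon>) 1 (-m)"
  have "(\<lambda>n. Complex E \<epsilon> - of_real (v (x + real n * \<alpha>))) = (\<lambda>n. of_real (c n) + \<i> * of_real \<epsilon>)"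
    by (simp add: fun_eq_iff complex_eq_iff c_def)
  then have sum_le: "\<epsilon> * (\<Sum>n\<in>{1..2*k}. (cmod (u n))\<^sup>2) \<le> Im m"
    using m_plus_bound[of "Complex E \<epsilon>" v x \<alpha> "2*k"] \<epsilon> by (simp add: u_def m_def)
  have "herm_form (P$1$1) (P$1$2) (P$2$2) m \<le> 9/4 * (\<Sum>n\<in>{1..2*k}. (cmod (u n))\<^sup>2)"
    using det unfolding P_def Pk_entries u_def c_def by (rule herm_form_le_sum_norm_sq)
  then have "\<epsilon> * herm_form (P$1$1) (P$1$2) (P$2$2) m \<le> 9/4 * (\<epsilon> * (\<Sum>n\<in>{1..2*k}. (cmod (u n))\<^sup>2))"
    using \<epsilon> by (simp add: mult_left_mono mult.left_commute)
  also have "\<dots> \<le> 9/4 * Im m" using sum_le by simp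
  finally show ?thesis
    using \<epsilon> by (simp add: field_simps)
qed

lemma psi_ratio_bounds:
  assumes p: "p > 0" and r: "r > 0" and \<epsilon>: "\<epsilon> > 0" and det: "4 * \<epsilon>\<^sup>2 * (p * r - q\<^sup>2) = 1"
    and le: "herm_form p q r m \<le> 9 / (4 * \<epsilon>) * Im m"
    and N: "p \<le> N" "r \<le> N" "N \<le> p + r"
  shows "1/10 < psi m / (2 * \<epsilon> * N) \<and> psi m / (2 * \<epsilon> * N) < 10"
proof -
  have \<Delta>: "p * r - q\<^sup>2 = 1 / (4 * \<epsilon>\<^sup>2)" using det \<epsilon> by (simp add: field_simps)
  then have \<Delta>_pos: "p * r - q\<^sup>2 > 0" using \<epsilon> by simp
  have K: "9 / (4 * \<epsilon>) > 0" using \<epsilon> by simp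
  have "psi m \<le> (p + r) * (9 / (4 * \<epsilon>)) / (p * r - q\<^sup>2)"
    by (rule psi_le_of_herm_form_le[OF p r \<Delta>_pos K le])
  also have "\<dots> = 9 * \<epsilon> * (p + r)"
    using \<epsilon> unfolding \<Delta> by (simp add: field_simps power2_eq_square)
  also have "\<dots> \<le> 18 * \<epsilon> * N" using N \<epsilon> by simp
  finally have upper: "psi m \<le> 18 * \<epsilon> * N" .
  have "2 * \<epsilon> * N / 9 \<le> max p r / (9 / (4 * \<epsilon>))"
    using N \<epsilon> by (simp add: field_simps)
  also have "\<dots> \<le> psi m"
    by (rule le_psi_of_herm_form_le[OF p r \<Delta>_pos K le])
  finally have lower: "2 * \<epsilon> * N / 9 \<le> psi m" .
  have "2 * \<epsilon> * N > 0" using N p \<epsilon> by simp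
  with upper lower show ?thesis by (simp add: field_simps)
qed

theorem lemma4p2:
  fixes \<alpha> :: real
  assumes "\<alpha> \<notin> \<rat>"
  shows "\<exists>C>0. \<forall>(v :: real \<Rightarrow> real) (x :: real) (E :: real) (k :: nat) (\<epsilon> :: real).
           real_analytic v \<and> periodic1 v \<and> k \<ge> 1 \<and> \<epsilon> > 0 \<and>
           det (Pk v E \<alpha> x k) = 1 / (4 * \<epsilon>\<^sup>2) \<longrightarrow>
           1 / C < psi (m_plus v \<alpha> x (Complex E \<epsilon>)) / (2 * \<epsilon> * mat_opnorm (Pk v E \<alpha> x k))
           \<and> psi (m_plus v \<alpha> x (Complex E \<epsilon>)) / (2 * \<epsilon> * mat_opnorm (Pk v E \<alpha> x k)) < C"
\<comment> \<open>\<open>C = 10\<close> works.\<close>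
proof (intro exI[of _ "10::real"] conjI allI impI)
  fix v x E k \<epsilon>
  assume "real_analytic v \<and> periodic1 v \<and> k \<ge> 1 \<and> \<epsilon> > 0 \<and> det (Pk v E \<alpha> x k) = 1 / (4 * \<epsilon>\<^sup>2)"
  then have k: "k \<ge> 1" and \<epsilon>: "\<epsilon> > 0" and det: "det (Pk v E \<alpha> x k) = 1 / (4 * \<epsilon>\<^sup>2)" by auto
  define P where "P = Pk v E \<alpha> x k"
  have sym: "P$2$1 = P$1$2" by (simp add: P_def Pk_symmetric)
  have pos: "P$1$1 > 0" "P$2$2 > 0" using Pk_diag_pos[OF k] by (simp_all add: P_def)
  have det': "4 * \<epsilon>\<^sup>2 * (P$1$1 * P$2$2 - (P$1$2)\<^sup>2) = 1"
    using det \<epsilon> by (simp add: P_def[symmetric] det_2 sym power2_eq_square field_simps)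
  then have "P$1$1 * P$2$2 - (P$1$2)\<^sup>2 = 1 / (4 * \<epsilon>\<^sup>2)" using \<epsilon> by (simp add: field_simps)
  then have "P$1$1 * P$2$2 - (P$1$2)\<^sup>2 > 0" using \<epsilon> by simp
  then have N: "P$1$1 \<le> mat_opnorm P" "P$2$2 \<le> mat_opnorm P" "mat_opnorm P \<le> P$1$1 + P$2$2"
    using diag_le_mat_opnorm[of P 1] diag_le_mat_opnorm[of P 2] mat_opnorm_le_trace[OF sym pos] pos by auto
  have "herm_form (P$1$1) (P$1$2) (P$2$2) (m_plus v \<alpha> x (Complex E \<epsilon>))
      \<le> 9 / (4 * \<epsilon>) * Im (m_plus v \<alpha> x (Complex E \<epsilon>))"
    using \<epsilon> det' unfolding P_def by (rule m_plus_herm_form_bound)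
  from psi_ratio_bounds[OF pos \<epsilon> det' this N, unfolded P_def]
  show "1 / 10 < psi (m_plus v \<alpha> x (Complex E \<epsilon>)) / (2 * \<epsilon> * mat_opnorm (Pk v E \<alpha> x k))"
    and "psi (m_plus v \<alpha> x (Complex E \<epsilon>)) / (2 * \<epsilon> * mat_opnorm (Pk v E \<alpha> x k)) < 10"
    by simp_all
qed simp

end
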